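(* Let $m>2$ be an integer and let $q$ be a prime power with $(m-1)\mid(q-1)$ and $m\mid(q-1)$. Let $n=1+\frac{q-1}{m}$. Then $|C_m+C_n|\le q-1$. In particular, not every element of $\mathbb{F}_q$ is the sum of an $m$-potent and an $n$-potent.
   Context: For a prime power $q$ and an integer $k>1$, an element $a\in\mathbb{F}_q$ is called a $k$-potent if $a^k=a$, and $C_k$ denotes the set of all $k$-potents in $\mathbb{F}_q$. For sets $A,B\subseteq\mathbb{F}_q$, $A+B=\{a+b:a\in A,b\in B\}$. *)

theory Defs
  imports Main
begin

definition potents :: "nat \<Rightarrow> 'a::field set" where
  "potents k = {a. a ^ k = a}"

definition sumset :: "'a::plus set \<Rightarrow> 'a set \<Rightarrow> 'a set" where
  "sumset A B = {a + b | a b. a \<in> A \<and> b \<in> B}"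

end

theory Submission
  imports Defs "HOL-Computational_Algebra.Polynomial"
begin

text \<open>
  Write \<open>q - 1 = m d\<close> and \<open>k = m - 1\<close>; then \<open>n = d + 1\<close>, and \<open>k\<close> divides \<open>d\<close>
  because it divides \<open>q - 1 = d + k d\<close>. A nonzero \<open>s\<close>-potent is an \<open>(s - 1)\<close>-th
  root of unity, so with \<open>\<mu>\<^sub>j\<close> the group of \<open>j\<close>-th roots of unity,
  \<open>C\<^sub>m = {0} \<union> \<mu>\<^sub>k\<close> and \<open>C\<^sub>n = {0} \<union> \<mu>\<^sub>d\<close> with \<open>\<mu>\<^sub>k \<subseteq> \<mu>\<^sub>d\<close>.
  Hence \<open>C\<^sub>m + C\<^sub>n \<subseteq> C\<^sub>n \<union> (\<mu>\<^sub>k + \<mu>\<^sub>d)\<close>, where \<open>|C\<^sub>n| \<le> d + 1\<close> and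
  \<open>|\<mu>\<^sub>k + \<mu>\<^sub>d| \<le> k d - 1\<close>: the sum map on \<open>\<mu>\<^sub>k \<times> \<mu>\<^sub>d\<close> is not injective,
  as \<open>\<zeta> + 1 = 1 + \<zeta>\<close> for any \<open>\<zeta> \<in> \<mu>\<^sub>k - {1}\<close>, and if there is no such \<open>\<zeta>\<close>
  then \<open>|\<mu>\<^sub>k| = 1 < k\<close>. Altogether \<open>|C\<^sub>m + C\<^sub>n| \<le> (k + 1) d = q - 1\<close>.
\<close>

lemma
  fixes k :: nat
  assumes "k \<ge> 1"
  shows finite_roots_of_unity: "finite {x::'a::idom. x ^ k = 1}"
    and card_roots_of_unity_le: "card {x::'a::idom. x ^ k = 1} \<le> k"
proof -
  let ?p = "monom (1::'a) k + (- 1)"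
  have "degree ?p = k"
    using assms by (subst degree_add_eq_left) (auto simp: degree_monom_eq)
  moreover have "?p \<noteq> 0"
    using calculation assms by auto
  moreover have "{x::'a. x ^ k = 1} = {x. poly ?p x = 0}"
    by (simp add: poly_monom)
  ultimately show "finite {x::'a. x ^ k = 1}" "card {x::'a. x ^ k = 1} \<le> k"
    using poly_roots_finite card_poly_roots_bound by metis+
qed

lemma potents_Suc: "potents (Suc k) = insert (0::'a::field) {x. x ^ k = 1}"
proof -
  have "x * x ^ k = x \<longleftrightarrow> x = 0 \<or> x ^ k = 1" for x :: 'a
    using mult_cancel_left[of x "x ^ k" 1] by auto
  then show ?thesis by (auto simp: potents_def)
qed

lemma sumset_eq_image: "sumset A B = (\<lambda>(a, b). a + b) ` (A \<times> B)"
  by (auto simp: sumset_def)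

lemma sumset_insert_zero:
  fixes A B :: "'a::monoid_add set"
  shows "sumset (insert 0 A) (insert 0 B) = insert 0 (A \<union> B \<union> sumset A B)"
  by (auto simp: sumset_def) force+

lemma card_sumset_le:
  assumes "finite A" "finite B"
  shows "card (sumset A B) \<le> card A * card B"
  unfolding sumset_eq_image card_cartesian_product[symmetric]
  using assms by (intro card_image_le) simp

lemma card_sumset_less:
  fixes A B :: "'a::ab_semigroup_add set"
  assumes "finite B" "A \<subseteq> B" "a \<in> A" "b \<in> A" "a \<noteq> b"
  shows "card (sumset A B) < card A * card B"
proof -
  have fin: "finite (A \<times> B)"
    using assms(1,2) finite_subset by blast
  have "\<not> inj_on (\<lambda>(a, b). a + b) (A \<times> B)"
  proof
    assume "inj_on (\<lambda>(a, b). a + b) (A \<times> B)"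
    moreover have "(a, b) \<in> A \<times> B" "(b, a) \<in> A \<times> B"
      using assms(2-4) by auto
    ultimately have "(a, b) = (b, a)"
      by (metis inj_onD add.commute case_prod_conv)
    with \<open>a \<noteq> b\<close> show False by simp
  qed
  then have "card ((\<lambda>(a, b). a + b) ` (A \<times> B)) \<noteq> card (A \<times> B)"
    using inj_on_iff_eq_card[OF fin] by blast
  with card_image_le[OF fin, of "\<lambda>(a, b). a + b"] show ?thesis
    by (simp add: sumset_eq_image card_cartesian_product)
qed

lemma roots_of_unity_mono:
  "k dvd d \<Longrightarrow> {x::'a::monoid_mult. x ^ k = 1} \<subseteq> {x. x ^ d = 1}"
  by (auto simp: power_mult dvd_def)

lemma card_sumset_roots_of_unity_less:
  fixes k d :: nat
  assumes "k \<ge> 2" "d \<ge> 1" "k dvd d"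
  shows "card (sumset {x::'a::idom. x ^ k = 1} {x. x ^ d = 1}) < k * d"
proof -
  let ?A = "{x::'a. x ^ k = 1}" and ?B = "{x::'a. x ^ d = 1}"
  have fin: "finite ?A" "finite ?B"
    using assms by (auto intro: finite_roots_of_unity)
  have card: "card ?A \<le> k" "card ?B \<le> d"
    using assms by (auto intro: card_roots_of_unity_le)
  show ?thesis
  proof (cases "card ?A \<le> 1")
    case True
    have "card (sumset ?A ?B) \<le> 1 * d"
      using card_sumset_le[OF fin] mult_le_mono[OF True card(2)] by linarith
    also have "\<dots> < k * d"
      using assms(1,2) by simp
    finally show ?thesis .
  next
    case False
    then obtain a b where "a \<in> ?A" "b \<in> ?A" "a \<noteq> b"
      using card_le_Suc0_iff_eq[OF fin(1)] by auto
    with card_sumset_less[OF fin(2) roots_of_unity_mono[OF assms(3)]]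
    have "card (sumset ?A ?B) < card ?A * card ?B"
      by blast
    also have "\<dots> \<le> k * d"
      using card by (intro mult_le_mono)
    finally show ?thesis .
  qed
qed

lemma card_sumset_potents_le:
  fixes k d :: nat
  assumes "k \<ge> 2" "d \<ge> 1" "k dvd d"
  shows "card (sumset (potents (Suc k)) (potents (Suc d)) :: 'a::field set) \<le> (k + 1) * d"
proof -
  let ?A = "{x::'a. x ^ k = 1}" and ?B = "{x::'a. x ^ d = 1}"
  have "sumset (potents (Suc k)) (potents (Suc d)) = insert 0 ?B \<union> sumset ?A ?B"
    using roots_of_unity_mono[OF assms(3)] by (auto simp: potents_Suc sumset_insert_zero)
  then have "card (sumset (potents (Suc k)) (potents (Suc d)) :: 'a set)
      \<le> card (insert 0 ?B) + card (sumset ?A ?B)"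
    by (metis card_Un_le)
  also have "card (insert (0::'a) ?B) \<le> d + 1"
    using assms(2) card_roots_of_unity_le[of d, where 'a='a] finite_roots_of_unity[of d, where 'a='a]
    by (simp add: card_insert_if)
  finally show ?thesis
    using card_sumset_roots_of_unity_less[OF assms, where 'a='a] by simp
qed

theorem mainTheorem6:
  fixes m n q :: nat
  assumes "q = card (UNIV :: 'a::{field,finite} set)"
    and "m > 2"
    and "(m - 1) dvd (q - 1)"
    and "m dvd (q - 1)"
    and "n = 1 + (q - 1) div m"
  shows "card (sumset (potents m) (potents n) :: 'a set) \<le> q - 1
         \<and> sumset (potents m) (potents n) \<noteq> (UNIV :: 'a set)"
proof -
  define d k where "d = (q - 1) div m" and "k = m - 1"
  have "card {0::'a, 1} \<le> q"
    unfolding assms(1) by (rule card_mono) simp_all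
  moreover have "q - 1 = m * d"
    using assms(4) by (simp add: d_def)
  ultimately have q: "q - 1 = (k + 1) * d" and "d \<ge> 1" "k \<ge> 2"
    using assms(2) by (auto simp: k_def Suc_le_eq intro: gr0I)
  moreover have "k dvd d"
    using assms(3) q unfolding k_def[symmetric] by (simp add: distrib_right dvd_add_left_iff)
  moreover have "m = Suc k" "n = Suc d"
    using assms(2,5) by (simp_all add: d_def k_def)
  ultimately have "card (sumset (potents m) (potents n) :: 'a set) \<le> q - 1"
    using card_sumset_potents_le[of k d] by simp
  moreover from this have "sumset (potents m) (potents n) \<noteq> (UNIV :: 'a set)"
    using assms(1) q \<open>d \<ge> 1\<close> by auto
  ultimately show ?thesis ..
qed

end
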